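(* Let $T_1^*\in[0,1]$ and $T_2^*=(T_1^* )^3$, and let $\tilde W^*=\{\tilde h\in\tilde W: t(K_2,\tilde h)=T_1^*,\ t(K_3,\tilde h)=T_2^*\}$. Then $$\inf_{\tilde h\in\tilde W^*}I(\tilde h)=I\big((T_2^* )^{1/3}\big)=I(T_1^* ).$$
   Context: $W$ is the set of measurable symmetric $h:[0,1]^2\to[0,1]$, $\tilde W$ its quotient under relabelling by measure-preserving bijections of $[0,1]$. $t(K_2,h)=\int h(x,y)\,dx\,dy$ and $t(K_3,h)=\int h(x_1,x_2)h(x_2,x_3)h(x_3,x_1)\,dx_1dx_2dx_3$. $I(u)=\tfrac12u\log u+\tfrac12(1-u)\log(1-u)$ with $0\log0=0$, and $I(h)=\int_{[0,1]^2}I(h(x,y))\,dx\,dy$ (well defined on $\tilde W$). *)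

theory Defs
  imports "HOL-Analysis.Analysis"
begin

text \<open>Graphons: measurable symmetric functions [0,1]^2 -> [0,1], represented as
  curried real functions; only values on the unit square matter.\<close>

definition unit_sq :: "(real \<times> real) set" where
  "unit_sq = {0..1} \<times> {0..1}"

definition unit_cube :: "(real \<times> real \<times> real) set" where
  "unit_cube = {0..1} \<times> {0..1} \<times> {0..1}"

definition graphon :: "(real \<Rightarrow> real \<Rightarrow> real) \<Rightarrow> bool" where
  "graphon h \<longleftrightarrow>
     (\<lambda>(x, y). h x y) \<in> borel_measurable (lebesgue_on unit_sq) \<and>
     (\<forall>x\<in>{0..1}. \<forall>y\<in>{0..1}. h x y = h y x \<and> 0 \<le> h x y \<and> h x y \<le> 1)"

definition tK2 :: "(real \<Rightarrow> real \<Rightarrow> real) \<Rightarrow> real" where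
  "tK2 h = (\<integral>p. (case p of (x, y) \<Rightarrow> h x y) \<partial>(lebesgue_on unit_sq))"

definition tK3 :: "(real \<Rightarrow> real \<Rightarrow> real) \<Rightarrow> real" where
  "tK3 h = (\<integral>p. (case p of (x1, x2, x3) \<Rightarrow> h x1 x2 * h x2 x3 * h x3 x1)
              \<partial>(lebesgue_on unit_cube))"

definition xlogx :: "real \<Rightarrow> real" where
  "xlogx u = (if u = 0 then 0 else u * ln u)"

definition Ient :: "real \<Rightarrow> real" where
  "Ient u = xlogx u / 2 + xlogx (1 - u) / 2"

definition Igraphon :: "(real \<Rightarrow> real \<Rightarrow> real) \<Rightarrow> real" where
  "Igraphon h = (\<integral>p. Ient (case p of (x, y) \<Rightarrow> h x y) \<partial>(lebesgue_on unit_sq))"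

end

theory Submission
  imports Defs "HOL-Probability.Probability_Measure"
begin

text \<open>The entropy function \<open>Ient\<close> is convex on \<open>[0,1]\<close>, so by Jensen's inequality on the
  probability space \<open>[0,1]\<^sup>2\<close> every graphon with edge density \<open>T\<^sub>1\<close> has \<open>Igraphon h \<ge> Ient T\<^sub>1\<close>.
  The constant graphon \<open>T\<^sub>1\<close> has edge density \<open>T\<^sub>1\<close>, triangle density \<open>T\<^sub>1\<^sup>3\<close> and entropy
  \<open>Ient T\<^sub>1\<close>, so the infimum is attained there. Jensen is proved by a supporting line at
  an interior point; at the endpoints \<open>0\<close> and \<open>1\<close> the graphon is a.e. constant.\<close>

lemma prob_space_lebesgue_on:
  assumes "S \<in> lmeasurable" "measure lebesgue S = 1"
  shows "prob_space (lebesgue_on S)"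
  using assms by (intro prob_spaceI) (simp add: emeasure_restrict_space fmeasurableD emeasure_eq_measure2)

lemma prob_space_unit_sq: "prob_space (lebesgue_on unit_sq)"
proof -
  have cbox: "unit_sq = cbox (0, 0) (1, 1)"
    by (simp add: unit_sq_def cbox_Pair_eq)
  show ?thesis
    by (intro prob_space_lebesgue_on) (simp_all add: cbox content_Pair)
qed

lemma prob_space_unit_cube: "prob_space (lebesgue_on unit_cube)"
proof -
  have cbox: "unit_cube = cbox (0, 0, 0) (1, 1, 1)"
    by (simp add: unit_cube_def cbox_Pair_eq)
  show ?thesis
    by (intro prob_space_lebesgue_on) (simp_all add: cbox content_Pair)
qed

lemma xlogx_ge_tangent:
  assumes "0 \<le> u" "0 < t"
  shows "xlogx t + (ln t + 1) * (u - t) \<le> xlogx u"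
proof (cases "u = 0")
  case True
  then show ?thesis using assms by (simp add: xlogx_def)
next
  case False
  with assms have "0 < u" by simp
  have "u * ln (t / u) \<le> u * (t / u - 1)"
    using \<open>0 < u\<close> assms by (intro mult_left_mono ln_le_minus_one) auto
  then have "u * (ln t - ln u) \<le> t - u"
    using \<open>0 < u\<close> assms by (simp add: ln_div algebra_simps)
  then show ?thesis
    using \<open>0 < u\<close> assms by (simp add: xlogx_def algebra_simps)
qed

lemma Ient_ge_tangent:
  assumes "0 \<le> u" "u \<le> 1" "0 < t" "t < 1"
  shows "Ient t + (ln t - ln (1 - t)) / 2 * (u - t) \<le> Ient u"
  using xlogx_ge_tangent[of u t] xlogx_ge_tangent[of "1 - u" "1 - t"] assms
  by (simp add: Ient_def field_simps)

lemma Ient_one_minus [simp]: "Ient (1 - u) = Ient u"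
  by (simp add: Ient_def)

lemma Ient_0 [simp]: "Ient 0 = 0"
  by (simp add: Ient_def xlogx_def)

lemma abs_Ient_le_1:
  assumes "0 \<le> u" "u \<le> 1"
  shows "\<bar>Ient u\<bar> \<le> 1"
proof -
  have "v - 1 \<le> xlogx v \<and> xlogx v \<le> 0" if "0 \<le> v" "v \<le> 1" for v
    using xlogx_ge_tangent[of v 1] that by (auto simp: xlogx_def mult_nonneg_nonpos)
  from this[of u] this[of "1 - u"] assms show ?thesis
    by (simp add: Ient_def)
qed

lemma borel_measurable_Ient [measurable]: "Ient \<in> borel_measurable borel"
  unfolding Ient_def xlogx_def by measurable

context prob_space
begin

lemma integrable_unit_interval_valued:
  assumes "f \<in> borel_measurable M" "\<And>x. x \<in> space M \<Longrightarrow> f x \<in> {0..1}"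
  shows "integrable M f" "integrable M (\<lambda>x. Ient (f x))"
  using assms abs_Ient_le_1 by (auto intro!: integrable_const_bound[where B = 1])

lemma expectation_Ient_eq_0:
  assumes f: "f \<in> borel_measurable M" "\<And>x. x \<in> space M \<Longrightarrow> f x \<in> {0..1}"
    and "expectation f = 0"
  shows "expectation (\<lambda>x. Ient (f x)) = 0"
proof -
  have "AE x in M. f x = 0"
    using integral_nonneg_eq_0_iff_AE[OF integrable_unit_interval_valued(1)[OF f]] f assms(3)
    by (auto intro: AE_I2)
  then have "AE x in M. Ient (f x) = 0"
    by eventually_elim simp
  then show ?thesis
    by (simp add: integral_eq_zero_AE)
qed

theorem Ient_expectation_le:
  assumes f: "f \<in> borel_measurable M" "\<And>x. x \<in> space M \<Longrightarrow> f x \<in> {0..1}"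
  shows "Ient (expectation f) \<le> expectation (\<lambda>x. Ient (f x))"
proof -
  note int = integrable_unit_interval_valued[OF f]
  have "0 \<le> expectation f" "expectation f \<le> 1"
    using f by (auto intro!: integral_ge_const integral_le_const int AE_I2)
  then consider "expectation f = 0" | "expectation f = 1" | "0 < expectation f" "expectation f < 1"
    by linarith
  then show ?thesis
  proof cases
    case 1
    then show ?thesis
      using expectation_Ient_eq_0[OF f] by simp
  next
    case 2
    have "expectation (\<lambda>x. 1 - f x) = 0"
      using 2 int(1) prob_space by (simp add: integral_diff)
    then have "expectation (\<lambda>x. Ient (1 - f x)) = 0"
      using f by (intro expectation_Ient_eq_0) auto
    then show ?thesis
      using 2 Ient_one_minus[of 0] by simp
  next
    case 3
    define T where "T = expectation f"
    define c where "c = (ln T - ln (1 - T)) / 2"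
    have "Ient T = expectation (\<lambda>x. Ient T + c * (f x - T))"
      using int(1) prob_space by (simp add: T_def integral_add integral_diff)
    also have "\<dots> \<le> expectation (\<lambda>x. Ient (f x))"
    proof (rule integral_mono)
      show "integrable M (\<lambda>x. Ient T + c * (f x - T))"
        using int(1) by simp
      fix x
      assume "x \<in> space M"
      with f 3 show "Ient T + c * (f x - T) \<le> Ient (f x)"
        unfolding c_def T_def by (intro Ient_ge_tangent) auto
    qed (rule int(2))
    finally show ?thesis
      by (simp add: T_def)
  qed
qed

end

lemma Ient_tK2_le_Igraphon:
  assumes "graphon h"
  shows "Ient (tK2 h) \<le> Igraphon h"
proof -
  interpret prob_space "lebesgue_on unit_sq"
    by (rule prob_space_unit_sq)
  show ?thesis
    using assms unfolding tK2_def Igraphon_def graphon_def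
    by (intro Ient_expectation_le) (auto simp: unit_sq_def)
qed

lemma constant_graphon:
  assumes "0 \<le> c" "c \<le> 1"
  shows "graphon (\<lambda>_ _. c)" "tK2 (\<lambda>_ _. c) = c" "tK3 (\<lambda>_ _. c) = c ^ 3"
    "Igraphon (\<lambda>_ _. c) = Ient c"
proof -
  interpret sq: prob_space "lebesgue_on unit_sq"
    by (rule prob_space_unit_sq)
  interpret cube: prob_space "lebesgue_on unit_cube"
    by (rule prob_space_unit_cube)
  show "graphon (\<lambda>_ _. c)"
    using assms by (simp add: graphon_def)
  show "tK2 (\<lambda>_ _. c) = c" "Igraphon (\<lambda>_ _. c) = Ient c"
    using sq.prob_space by (simp_all add: tK2_def Igraphon_def)
  show "tK3 (\<lambda>_ _. c) = c ^ 3"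
    using cube.prob_space by (simp add: tK3_def split_beta power3_eq_cube)
qed

theorem mainTheorem7:
  fixes T1 T2 :: real
  assumes "0 \<le> T1" and "T1 \<le> 1" and "T2 = T1 ^ 3"
  shows "(INF h \<in> {h. graphon h \<and> tK2 h = T1 \<and> tK3 h = T2}. Igraphon h) = Ient (root 3 T2)
       \<and> Ient (root 3 T2) = Ient T1"
proof -
  have "root 3 T2 = T1"
    using assms by (simp add: real_root_pos_unique)
  moreover have "(INF h \<in> {h. graphon h \<and> tK2 h = T1 \<and> tK3 h = T2}. Igraphon h) = Ient T1"
  proof (rule cInf_eq_minimum)
    show "Ient T1 \<in> Igraphon ` {h. graphon h \<and> tK2 h = T1 \<and> tK3 h = T2}"
      using constant_graphon[OF assms(1,2)] assms(3) by (intro image_eqI) auto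
    show "Ient T1 \<le> x" if "x \<in> Igraphon ` {h. graphon h \<and> tK2 h = T1 \<and> tK3 h = T2}" for x
      using that Ient_tK2_le_Igraphon by auto
  qed
  ultimately show ?thesis
    by simp
qed

end
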